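(* Let $Q\in\mathbb{R}^{n\times n}$ be symmetric positive definite, $h\in\mathbb{R}^n$, $\delta>0$, and $F(x)=\tfrac12x^TQx-x^Th$. Let $x^0\in\mathbb{R}^n$ have all entries positive and define the sequence $(x^k)$ by \[ x^{k+1}_i=x^k_i\,\frac{2(Q^-x^k)_i+h_i^++\delta}{(|Q|x^k)_i+h_i^-+\delta},\quad i=1,\dots,n . \] Then every $x^k$ has all entries positive, $F(x^{k+1})\le F(x^k)$ for all $k$, with strict inequality whenever $x^{k+1}\neq x^k$; and the sequence $F(x^k)$ converges to the global minimum of $F$ over $\{x\in\mathbb{R}^n: x\ge 0\}$, which is attained at the stationary point of the iteration.
   Context: For a matrix $M$, $M^+=\max(M,0)$ and $M^-=\max(-M,0)$ entrywise, and $|M|=M^++M^-$; for a vector $h$, $h^+=\max(h,0)$, $h^-=\max(-h,0)$ entrywise. The problem considered is the nonnegative quadratic program $\min F(x)$ subject to $x\ge 0$ (entrywise). *)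

theory Defs
  imports "HOL-Analysis.Analysis"
begin

definition mat_pos :: "real^'n^'m \<Rightarrow> real^'n^'m" where
  "mat_pos M = (\<chi> i j. max (M $ i $ j) 0)"

definition mat_neg :: "real^'n^'m \<Rightarrow> real^'n^'m" where
  "mat_neg M = (\<chi> i j. max (- (M $ i $ j)) 0)"

definition mat_abs :: "real^'n^'m \<Rightarrow> real^'n^'m" where
  "mat_abs M = mat_pos M + mat_neg M"

definition vec_pos :: "real^'n \<Rightarrow> real^'n" where
  "vec_pos h = (\<chi> i. max (h $ i) 0)"

definition vec_neg :: "real^'n \<Rightarrow> real^'n" where
  "vec_neg h = (\<chi> i. max (- (h $ i)) 0)"

definition pos_def_mat :: "real^'n^'n \<Rightarrow> bool" where
  "pos_def_mat Q \<longleftrightarrow> transpose Q = Q \<and> (\<forall>x. x \<noteq> 0 \<longrightarrow> x \<bullet> (Q *v x) > 0)"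

definition qp_obj :: "real^'n^'n \<Rightarrow> real^'n \<Rightarrow> real^'n \<Rightarrow> real" where
  "qp_obj Q h x = (1/2) * (x \<bullet> (Q *v x)) - x \<bullet> h"

definition mu_step :: "real^'n^'n \<Rightarrow> real^'n \<Rightarrow> real \<Rightarrow> real^'n \<Rightarrow> real^'n" where
  "mu_step Q h \<delta> x = (\<chi> i. x $ i *
      ((2 * (mat_neg Q *v x) $ i + vec_pos h $ i + \<delta>) /
       ((mat_abs Q *v x) $ i + vec_neg h $ i + \<delta>)))"

end

theory Submission
  imports Defs
begin

text \<open>
  Writing \<open>g = Q x - h\<close> for the gradient, the update is \<open>x\<^sub>i \<mapsto> x\<^sub>i N\<^sub>i / D\<^sub>i\<close> with
  \<open>N\<^sub>i - D\<^sub>i = - g\<^sub>i\<close> and \<open>D\<^sub>i \<ge> (|Q| x)\<^sub>i + \<delta>\<close>.  The proof proceeds in four stages: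
  \<^item> Descent: bounding \<open>d\<^sup>T Q d\<close> by the diagonal majorant \<open>\<Sum>\<^sub>i (|Q| x)\<^sub>i d\<^sub>i\<^sup>2 / x\<^sub>i\<close>
    gives \<open>F(x') + \<delta> \<Sum>\<^sub>i (x'\<^sub>i - x\<^sub>i)\<^sup>2 / x\<^sub>i \<le> F(x)\<close> for the update \<open>x'\<close> of \<open>x > 0\<close>.
  \<^item> Fixed points: \<open>p \<ge> 0\<close> is fixed iff \<open>p\<^sub>i g\<^sub>i(p) = 0\<close> for all \<open>i\<close>; by definiteness a
    fixed point is determined by its support, so there are finitely many.
    A fixed point which also satisfies \<open>g(p) \<ge> 0\<close> (KKT) is a global minimiser.
  \<^item> A general fact about sequences in a Heine-Borel space: a bounded sequence whose
    steps tend to zero and whose cluster points lie in a finite set converges.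
  \<^item> For the iterates: \<open>F\<close> decreases, the iterates stay in a bounded sublevel set,
    the steps tend to zero, cluster points are fixed points, hence the iterates
    converge to a fixed point \<open>p\<close>; if \<open>p\<^sub>i = 0\<close> but \<open>g\<^sub>i(p) < 0\<close>, the update ratio
    would eventually exceed one and keep the positive coordinate \<open>x\<^sub>i\<close> away from 0.
  The main theorem combines these facts at the end of the file.
\<close>

definition qp_grad :: "real^'n^'n \<Rightarrow> real^'n \<Rightarrow> real^'n \<Rightarrow> real^'n" where
  "qp_grad Q h x = Q *v x - h"

definition mu_num :: "real^'n^'n \<Rightarrow> real^'n \<Rightarrow> real \<Rightarrow> real^'n \<Rightarrow> real^'n" where
  "mu_num Q h \<delta> x = (\<chi> i. 2 * (mat_neg Q *v x) $ i + vec_pos h $ i + \<delta>)"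

definition mu_den :: "real^'n^'n \<Rightarrow> real^'n \<Rightarrow> real \<Rightarrow> real^'n \<Rightarrow> real^'n" where
  "mu_den Q h \<delta> x = (\<chi> i. (mat_abs Q *v x) $ i + vec_neg h $ i + \<delta>)"

lemma mu_step_nth: "mu_step Q h \<delta> x $ i = x $ i * (mu_num Q h \<delta> x $ i / mu_den Q h \<delta> x $ i)"
  by (simp add: mu_step_def mu_num_def mu_den_def)

lemma mat_abs_nth: "mat_abs Q $ i $ j = \<bar>Q $ i $ j\<bar>"
  by (simp add: mat_abs_def mat_pos_def mat_neg_def)

text \<open>The key algebraic identity \<open>N - D = - g\<close>, from \<open>2 Q\<^sup>- - |Q| = - Q\<close> and \<open>h\<^sup>+ - h\<^sup>- = h\<close>.\<close>

lemma mu_num_eq: "mu_num Q h \<delta> x $ i = mu_den Q h \<delta> x $ i - qp_grad Q h x $ i"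
proof -
  have "2 * (mat_neg Q *v x) $ i - (mat_abs Q *v x) $ i
      = (\<Sum>j\<in>UNIV. (2 * max (- Q $ i $ j) 0 - \<bar>Q $ i $ j\<bar>) * x $ j)"
    by (simp add: matrix_vector_mult_def mat_abs_nth mat_neg_def sum_distrib_left
        sum_subtractf[symmetric] algebra_simps)
  also have "\<dots> = - (Q *v x) $ i"
    unfolding matrix_vector_mult_def vec_lambda_beta sum_negf[symmetric]
    by (rule sum.cong) (auto simp: max_def abs_if)
  finally have "2 * (mat_neg Q *v x) $ i - (mat_abs Q *v x) $ i = - (Q *v x) $ i" .
  moreover have "vec_pos h $ i - vec_neg h $ i = h $ i"
    by (simp add: vec_pos_def vec_neg_def max_def)
  ultimately show ?thesis by (simp add: mu_num_def mu_den_def qp_grad_def)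
qed

lemma mu_den_ge:
  assumes "\<forall>j. x $ j \<ge> 0" shows "mu_den Q h \<delta> x $ i \<ge> \<delta>"
proof -
  have "(mat_abs Q *v x) $ i \<ge> 0" using assms
    by (simp add: matrix_vector_mult_def mat_abs_nth sum_nonneg)
  moreover have "vec_neg h $ i \<ge> 0" by (simp add: vec_neg_def)
  ultimately show ?thesis by (simp add: mu_den_def)
qed

lemma mu_num_ge:
  assumes "\<forall>j. x $ j \<ge> 0" shows "mu_num Q h \<delta> x $ i \<ge> \<delta>"
proof -
  have "(mat_neg Q *v x) $ i \<ge> 0" using assms
    by (simp add: matrix_vector_mult_def mat_neg_def sum_nonneg)
  moreover have "vec_pos h $ i \<ge> 0" by (simp add: vec_pos_def)
  ultimately show ?thesis by (simp add: mu_num_def)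
qed

lemma mu_step_pos:
  assumes "\<forall>j. x $ j > 0" "\<delta> > 0" shows "mu_step Q h \<delta> x $ i > 0"
proof -
  have "\<forall>j. x $ j \<ge> 0" using assms(1) by (simp add: less_imp_le)
  hence "mu_num Q h \<delta> x $ i > 0" "mu_den Q h \<delta> x $ i > 0"
    using mu_num_ge mu_den_ge assms(2) by (metis order_less_le_trans)+
  thus ?thesis using assms(1) by (simp add: mu_step_nth)
qed

lemma qp_obj_expand:
  assumes "transpose Q = Q"
  shows "qp_obj Q h (x + d) = qp_obj Q h x + qp_grad Q h x \<bullet> d + 1/2 * (d \<bullet> (Q *v d))"
proof -
  have "x \<bullet> (Q *v d) = (Q *v x) \<bullet> d"
    by (metis assms dot_lmul_matrix inner_commute transpose_matrix_vector)
  thus ?thesis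
    by (simp add: qp_obj_def qp_grad_def matrix_vector_right_distrib inner_add_left
        inner_add_right inner_diff_left inner_commute[of d] algebra_simps)
qed

lemma two_mult_le_weighted:
  fixes q u w a b :: real assumes "a > 0" "b > 0"
  shows "2 * q * u * w \<le> \<bar>q\<bar> * (b * u\<^sup>2 / a + a * w\<^sup>2 / b)"
proof -
  have "0 \<le> (b * \<bar>u\<bar> - a * \<bar>w\<bar>)\<^sup>2" by simp
  hence "2 * \<bar>u * w\<bar> * (a * b) \<le> b\<^sup>2 * u\<^sup>2 + a\<^sup>2 * w\<^sup>2"
    by (simp add: power2_eq_square algebra_simps abs_mult)
  hence "2 * \<bar>u * w\<bar> \<le> b * u\<^sup>2 / a + a * w\<^sup>2 / b" using assms
    by (simp add: field_simps power2_eq_square)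
  hence "\<bar>q\<bar> * (2 * \<bar>u * w\<bar>) \<le> \<bar>q\<bar> * (b * u\<^sup>2 / a + a * w\<^sup>2 / b)"
    by (rule mult_left_mono) simp
  moreover have "2 * q * u * w \<le> \<bar>q\<bar> * (2 * \<bar>u * w\<bar>)"
    using abs_ge_self[of "q * (u * w)"] by (simp add: abs_mult mult.assoc)
  ultimately show ?thesis by linarith
qed

lemma quad_form_le_weighted:
  assumes "transpose Q = Q" "\<forall>j. x $ j > 0"
  shows "d \<bullet> (Q *v d) \<le> (\<Sum>i\<in>UNIV. (mat_abs Q *v x) $ i * ((d $ i)\<^sup>2 / x $ i))"
proof -
  have sym: "Q $ i $ j = Q $ j $ i" for i j
    using arg_cong[OF assms(1), of "\<lambda>M. M $ i $ j"] by (simp add: transpose_def)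
  let ?A = "\<Sum>i\<in>UNIV. \<Sum>j\<in>UNIV. \<bar>Q $ i $ j\<bar> * (x $ j * (d $ i)\<^sup>2 / x $ i)"
  let ?B = "\<Sum>i\<in>UNIV. \<Sum>j\<in>UNIV. \<bar>Q $ i $ j\<bar> * (x $ i * (d $ j)\<^sup>2 / x $ j)"
  have "2 * (d \<bullet> (Q *v d)) = (\<Sum>i\<in>UNIV. \<Sum>j\<in>UNIV. 2 * Q $ i $ j * d $ i * d $ j)"
    by (simp add: inner_vec_def matrix_vector_mult_def sum_distrib_left algebra_simps)
  also have "\<dots> \<le> (\<Sum>i\<in>UNIV. \<Sum>j\<in>UNIV.
      \<bar>Q $ i $ j\<bar> * (x $ j * (d $ i)\<^sup>2 / x $ i + x $ i * (d $ j)\<^sup>2 / x $ j))"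
    by (intro sum_mono two_mult_le_weighted) (use assms(2) in auto)
  also have "\<dots> = ?A + ?B"
    by (simp add: distrib_left sum.distrib)
  also have "?B = ?A"
    by (subst sum.swap) (simp add: sym)
  also have "?A = (\<Sum>i\<in>UNIV. (mat_abs Q *v x) $ i * ((d $ i)\<^sup>2 / x $ i))"
    by (simp add: matrix_vector_mult_def mat_abs_nth sum_distrib_right sum_divide_distrib
        times_divide_eq_right mult.assoc)
  finally show ?thesis by simp
qed

lemma mu_step_descent:
  assumes sym: "transpose Q = Q" and \<delta>: "\<delta> > 0" and x: "\<forall>j. x $ j > 0"
  shows "qp_obj Q h (mu_step Q h \<delta> x)
           + \<delta> * (\<Sum>i\<in>UNIV. (mu_step Q h \<delta> x $ i - x $ i)\<^sup>2 / x $ i)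
         \<le> qp_obj Q h x"
proof -
  define d where "d = mu_step Q h \<delta> x - x"
  define w where "w i = (d $ i)\<^sup>2 / x $ i" for i
  define g where "g = qp_grad Q h x"
  define A where "A = mat_abs Q *v x"
  have termwise: "g $ i * d $ i + 1/2 * (A $ i * w i) \<le> - \<delta> * w i" for i
  proof -
    let ?D = "mu_den Q h \<delta> x $ i"
    have D: "?D \<ge> \<delta>" using x by (intro mu_den_ge) (simp add: less_imp_le)
    have xi: "x $ i > 0" using x by simp
    have "d $ i = x $ i * ((?D - g $ i) / ?D) - x $ i"
      by (simp add: d_def g_def mu_step_nth mu_num_eq)
    also have "\<dots> = - x $ i * g $ i / ?D"
      using D \<delta> by (simp add: field_simps)
    finally have "g $ i * d $ i = - ?D * w i"
      using D \<delta> xi by (simp add: w_def power2_eq_square field_simps)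
    moreover have "1/2 * A $ i - ?D \<le> - \<delta>"
      using D by (simp add: A_def mu_den_def vec_neg_def)
    moreover have "w i \<ge> 0" using xi by (simp add: w_def)
    ultimately show ?thesis
      using mult_right_mono[of "1/2 * A $ i - ?D" "- \<delta>" "w i"] by (simp add: algebra_simps)
  qed
  have "qp_obj Q h (x + d) = qp_obj Q h x + g \<bullet> d + 1/2 * (d \<bullet> (Q *v d))"
    unfolding g_def by (rule qp_obj_expand[OF sym])
  also have "\<dots> \<le> qp_obj Q h x + g \<bullet> d + 1/2 * (\<Sum>i\<in>UNIV. A $ i * w i)"
    using quad_form_le_weighted[OF sym x, of d] by (simp add: A_def w_def)
  also have "\<dots> = qp_obj Q h x + (\<Sum>i\<in>UNIV. g $ i * d $ i + 1/2 * (A $ i * w i))"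
    by (simp add: inner_vec_def sum.distrib sum_distrib_left)
  also have "\<dots> \<le> qp_obj Q h x - \<delta> * (\<Sum>i\<in>UNIV. w i)"
    using sum_mono[of UNIV _ "\<lambda>i. - \<delta> * w i", OF termwise]
    by (simp add: sum_distrib_left sum_negf)
  finally show ?thesis by (simp add: d_def w_def)
qed

lemma mu_step_strict_descent:
  assumes "transpose Q = Q" "\<delta> > 0" and x: "\<forall>j. x $ j > 0"
    and moved: "mu_step Q h \<delta> x \<noteq> x"
  shows "qp_obj Q h (mu_step Q h \<delta> x) < qp_obj Q h x"
proof -
  obtain k where k: "mu_step Q h \<delta> x $ k \<noteq> x $ k" using moved by (metis vec_eq_iff)
  have "(\<Sum>i\<in>UNIV. (mu_step Q h \<delta> x $ i - x $ i)\<^sup>2 / x $ i) > 0"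
    by (rule sum_pos2[where i = k]) (use k x in \<open>auto simp: less_imp_le\<close>)
  with mu_step_descent[OF assms(1-3), of h] \<open>\<delta> > 0\<close> show ?thesis
    by (smt (verit) mult_pos_pos)
qed

lemma mu_step_fixed_iff:
  assumes "\<delta> > 0" "\<forall>j. p $ j \<ge> 0"
  shows "mu_step Q h \<delta> p = p \<longleftrightarrow> (\<forall>i. p $ i = 0 \<or> qp_grad Q h p $ i = 0)"
proof -
  have "mu_step Q h \<delta> p $ i = p $ i \<longleftrightarrow> p $ i * qp_grad Q h p $ i = 0" for i
  proof -
    have "mu_den Q h \<delta> p $ i > 0"
      using mu_den_ge[OF assms(2)] assms(1) by (metis order_less_le_trans)
    thus ?thesis by (simp add: mu_step_nth mu_num_eq field_simps)
  qed
  thus ?thesis by (simp add: vec_eq_iff)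
qed

lemma pos_def_mat_psd: "pos_def_mat Q \<Longrightarrow> e \<bullet> (Q *v e) \<ge> 0"
  by (cases "e = 0") (auto simp: pos_def_mat_def less_imp_le)

text \<open>Two complementary points with the same support differ by \<open>e\<close> with
  \<open>e\<^sup>T Q e = 0\<close>, so by definiteness there is at most one per support set.\<close>

lemma finite_mu_fixed_points:
  assumes pd: "pos_def_mat Q" and \<delta>: "\<delta> > 0"
  shows "finite {p. (\<forall>i. p $ i \<ge> 0) \<and> mu_step Q h \<delta> p = p}" (is "finite ?P")
proof (rule inj_on_finite[where f = "\<lambda>p. {i. p $ i \<noteq> 0}" and B = "Pow UNIV"])
  show "inj_on (\<lambda>p. {i. p $ i \<noteq> 0}) ?P"
  proof (rule inj_onI)
    fix p q assume "p \<in> ?P" "q \<in> ?P" and supp: "{i. p $ i \<noteq> 0} = {i. q $ i \<noteq> 0}"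
    hence fp: "\<forall>i. p $ i = 0 \<or> qp_grad Q h p $ i = 0"
      and fq: "\<forall>i. q $ i = 0 \<or> qp_grad Q h q $ i = 0"
      using mu_step_fixed_iff[OF \<delta>, of p] mu_step_fixed_iff[OF \<delta>, of q] by simp_all
    have terms: "(p - q) $ i * (Q *v (p - q)) $ i = 0" for i
    proof (cases "p $ i = 0")
      case True
      thus ?thesis using supp by (auto simp: set_eq_iff)
    next
      case False
      moreover have "q $ i \<noteq> 0" using supp False by blast
      ultimately have "qp_grad Q h p $ i = 0" "qp_grad Q h q $ i = 0" using fp fq by auto
      thus ?thesis by (simp add: qp_grad_def matrix_vector_mult_diff_distrib)
    qed
    have "(p - q) \<bullet> (Q *v (p - q)) = 0"
      unfolding inner_vec_def inner_real_def using terms by (intro sum.neutral) blast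
    thus "p = q" using pd unfolding pos_def_mat_def by (metis less_irrefl right_minus_eq)
  qed
qed auto

lemma qp_obj_min_if_kkt:
  assumes sym: "transpose Q = Q" and psd: "\<And>e. e \<bullet> (Q *v e) \<ge> 0"
    and kkt: "\<forall>i. p $ i \<ge> 0 \<and> qp_grad Q h p $ i \<ge> 0 \<and> (p $ i = 0 \<or> qp_grad Q h p $ i = 0)"
    and y: "\<forall>i. y $ i \<ge> 0"
  shows "qp_obj Q h p \<le> qp_obj Q h y"
proof -
  have "qp_obj Q h y = qp_obj Q h p + qp_grad Q h p \<bullet> (y - p) + 1/2 * ((y - p) \<bullet> (Q *v (y - p)))"
    using qp_obj_expand[OF sym, of h p "y - p"] by simp
  moreover have "qp_grad Q h p \<bullet> (y - p) \<ge> 0"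
    unfolding inner_vec_def inner_real_def
  proof (intro sum_nonneg)
    fix i
    show "0 \<le> qp_grad Q h p $ i * (y - p) $ i"
      using kkt y by (cases "p $ i = 0") auto
  qed
  moreover have "(y - p) \<bullet> (Q *v (y - p)) \<ge> 0" by (rule psd)
  ultimately show ?thesis by linarith
qed

text \<open>Positive definiteness gives a uniform lower bound on the unit sphere, by compactness.\<close>

lemma pos_def_mat_coercive:
  fixes Q :: "real^'n^'n"
  assumes "pos_def_mat Q"
  shows "\<exists>l>0. \<forall>x. x \<bullet> (Q *v x) \<ge> l * (norm x)\<^sup>2"
proof -
  let ?f = "\<lambda>x::real^'n. x \<bullet> (Q *v x)"
  have cont: "continuous_on (sphere 0 1) ?f"
    by (intro continuous_intros linear_continuous_on matrix_vector_mul_bounded_linear)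
  obtain u where u: "u \<in> sphere 0 1" and umin: "\<forall>y\<in>sphere 0 1. ?f u \<le> ?f y"
    using continuous_attains_inf[OF compact_sphere _ cont] by auto
  have "u \<noteq> 0" using u by auto
  hence "?f u > 0" using assms by (simp add: pos_def_mat_def)
  moreover have "?f x \<ge> ?f u * (norm x)\<^sup>2" for x
  proof (cases "x = 0")
    case False
    define v where "v = (1 / norm x) *\<^sub>R x"
    have "v \<in> sphere 0 1" using False by (simp add: v_def)
    hence "?f u * (norm x)\<^sup>2 \<le> ?f v * (norm x)\<^sup>2" using umin by (intro mult_right_mono) auto
    also have "?f v * (norm x)\<^sup>2 = ?f x"
      using False by (simp add: v_def matrix_vector_mult_scaleR power2_eq_square)
    finally show ?thesis .
  qed simp
  ultimately show ?thesis by blast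
qed

lemma qp_obj_sublevel_bounded:
  assumes "pos_def_mat Q"
  shows "\<exists>R>0. \<forall>y. qp_obj Q h y \<le> C \<longrightarrow> norm y \<le> R"
proof -
  obtain l where l: "l > 0" "\<And>z. z \<bullet> (Q *v z) \<ge> l * (norm z)\<^sup>2"
    using pos_def_mat_coercive[OF assms] by blast
  define R where "R = max 1 ((2 * norm h + 2 * \<bar>C\<bar>) / l)"
  have "norm y \<le> R" if y: "qp_obj Q h y \<le> C" for y
  proof (cases "norm y \<le> 1")
    case False
    let ?r = "norm y"
    have "l * ?r\<^sup>2 \<le> 2 * ?r * norm h + 2 * \<bar>C\<bar>"
      using l(2)[of y] norm_cauchy_schwarz[of y h] y unfolding qp_obj_def by linarith
    also have "\<dots> \<le> ?r * (2 * norm h + 2 * \<bar>C\<bar>)"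
      using False mult_le_cancel_left1[of "\<bar>C\<bar>" ?r] by (simp add: algebra_simps)
    finally have "?r * (l * ?r) \<le> ?r * (2 * norm h + 2 * \<bar>C\<bar>)"
      by (simp add: power2_eq_square algebra_simps)
    moreover have "?r > 0" using False by linarith
    ultimately have "l * ?r \<le> 2 * norm h + 2 * \<bar>C\<bar>" by (rule mult_left_le_imp_le)
    hence "?r \<le> (2 * norm h + 2 * \<bar>C\<bar>) / l" using l(1) by (simp add: field_simps)
    thus ?thesis by (simp add: R_def)
  qed (simp add: R_def)
  moreover have "R > 0" by (simp add: R_def)
  ultimately show ?thesis by blast
qed

lemma mu_ratio_tendsto:
  fixes Q :: "real^'n^'n"
  assumes lim: "(s \<longlongrightarrow> p) F" and "\<delta> > 0" "\<forall>j. p $ j \<ge> 0"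
  shows "((\<lambda>k. mu_num Q h \<delta> (s k) $ i / mu_den Q h \<delta> (s k) $ i)
           \<longlongrightarrow> mu_num Q h \<delta> p $ i / mu_den Q h \<delta> p $ i) F"
proof (rule tendsto_divide)
  have mv: "((\<lambda>k. M *v s k) \<longlongrightarrow> M *v p) F" for M :: "real^'n^'n"
    by (rule bounded_linear.tendsto[OF matrix_vector_mul_bounded_linear lim])
  show "((\<lambda>k. mu_num Q h \<delta> (s k) $ i) \<longlongrightarrow> mu_num Q h \<delta> p $ i) F"
    unfolding mu_num_def vec_lambda_beta by (intro tendsto_intros mv)
  show "((\<lambda>k. mu_den Q h \<delta> (s k) $ i) \<longlongrightarrow> mu_den Q h \<delta> p $ i) F"
    unfolding mu_den_def vec_lambda_beta by (intro tendsto_intros mv)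
  show "mu_den Q h \<delta> p $ i \<noteq> 0"
    using mu_den_ge[OF assms(3)] assms(2) by (metis less_le_not_le)
qed

lemma mu_step_tendsto:
  assumes "(s \<longlongrightarrow> p) F" "\<delta> > 0" "\<forall>j. p $ j \<ge> 0"
  shows "((\<lambda>k. mu_step Q h \<delta> (s k)) \<longlongrightarrow> mu_step Q h \<delta> p) F"
proof (rule vec_tendstoI)
  fix i
  show "((\<lambda>k. mu_step Q h \<delta> (s k) $ i) \<longlongrightarrow> mu_step Q h \<delta> p $ i) F"
    unfolding mu_step_nth
    by (intro tendsto_mult mu_ratio_tendsto[OF assms] tendsto_vec_nth assms(1))
qed

lemma qp_obj_tendsto:
  assumes lim: "(s \<longlongrightarrow> p) F"
  shows "((\<lambda>k. qp_obj Q h (s k)) \<longlongrightarrow> qp_obj Q h p) F"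
proof -
  have "((\<lambda>k. Q *v s k) \<longlongrightarrow> Q *v p) F"
    by (rule bounded_linear.tendsto[OF matrix_vector_mul_bounded_linear lim])
  thus ?thesis unfolding qp_obj_def by (intro tendsto_intros lim)
qed

text \<open>A bounded sequence all of whose cluster points lie in \<open>P\<close> eventually stays
  arbitrarily close to \<open>P\<close> (otherwise a far-away subsequence would have a cluster point).\<close>

lemma eventually_near_cluster_points:
  fixes x :: "nat \<Rightarrow> 'a::heine_borel"
  assumes bdd: "bounded (range x)"
    and clus: "\<And>r q. strict_mono r \<Longrightarrow> (x \<circ> r) \<longlonglongrightarrow> q \<Longrightarrow> q \<in> P"
    and e: "e > 0"
  shows "eventually (\<lambda>k. \<exists>q\<in>P. dist (x k) q < e) sequentially"
proof (rule ccontr)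
  let ?far = "{k. \<forall>q\<in>P. dist (x k) q \<ge> e}"
  assume "\<not> eventually (\<lambda>k. \<exists>q\<in>P. dist (x k) q < e) sequentially"
  hence "infinite ?far"
    unfolding infinite_nat_iff_unbounded_le by (force simp: eventually_sequentially not_less)
  then obtain r :: "nat \<Rightarrow> nat" where r: "strict_mono r" "\<And>n. r n \<in> ?far"
    using infinite_enumerate by blast
  have "bounded (range (x \<circ> r))" using bdd by (rule bounded_subset) auto
  then obtain q r' where r': "strict_mono r'" "((x \<circ> r) \<circ> r') \<longlonglongrightarrow> q"
    using bounded_imp_convergent_subsequence by blast
  have "q \<in> P" using clus[OF strict_mono_o[OF r(1) r'(1)]] r'(2) by (simp add: o_assoc)
  moreover obtain j where "dist (x (r (r' j))) q < e"
    using tendstoD[OF r'(2) e] by (auto simp: eventually_sequentially)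
  ultimately show False using r(2)[of "r' j"] by force
qed

text \<open>If moreover \<open>P\<close> is finite and the steps tend to zero, the sequence converges:
  it eventually lies near \<open>P\<close> and is too slow to jump between the separated points of \<open>P\<close>.\<close>

lemma convergent_if_finite_cluster_points:
  fixes x :: "nat \<Rightarrow> 'a::heine_borel"
  assumes bdd: "bounded (range x)"
    and steps: "(\<lambda>k. dist (x (Suc k)) (x k)) \<longlonglongrightarrow> 0"
    and fin: "finite P"
    and clus: "\<And>r q. strict_mono r \<Longrightarrow> (x \<circ> r) \<longlonglongrightarrow> q \<Longrightarrow> q \<in> P"
  shows "\<exists>p\<in>P. x \<longlonglongrightarrow> p"
proof -
  have near: "eventually (\<lambda>k. \<exists>q\<in>P. dist (x k) q < e) sequentially" if "e > 0" for e
    by (rule eventually_near_cluster_points[OF bdd _ that]) (use clus in blast)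
  have "uniform_discrete P" using uniform_discrete_finite_iff[of P] fin by simp
  then obtain r where r: "r > 0" and sep: "\<And>p q. p \<in> P \<Longrightarrow> q \<in> P \<Longrightarrow> dist p q < r \<Longrightarrow> p = q"
    unfolding uniform_discrete_def by metis
  define \<epsilon> where "\<epsilon> = r / 3"
  have \<epsilon>: "\<epsilon> > 0" using r by (simp add: \<epsilon>_def)
  have "eventually (\<lambda>k. (\<exists>q\<in>P. dist (x k) q < \<epsilon>) \<and> dist (x (Suc k)) (x k) < \<epsilon>) sequentially"
    using near[OF \<epsilon>] tendstoD[OF steps \<epsilon>] by eventually_elim simp
  then obtain N where N: "\<And>k. k \<ge> N \<Longrightarrow> (\<exists>q\<in>P. dist (x k) q < \<epsilon>) \<and> dist (x (Suc k)) (x k) < \<epsilon>"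
    by (auto simp: eventually_sequentially)
  then obtain p where p: "p \<in> P" "dist (x N) p < \<epsilon>" by blast
  text \<open>Consecutive iterates are too close to switch between two separated points of \<open>P\<close>.\<close>
  have stay: "dist (x (N + m)) p < \<epsilon>" for m
  proof (induction m)
    case (Suc m)
    obtain q where q: "q \<in> P" "dist (x (Suc (N + m))) q < \<epsilon>" using N[of "Suc (N + m)"] by auto
    have "dist p q \<le> dist p (x (N + m)) + dist (x (N + m)) q" by (rule dist_triangle)
    also have "dist (x (N + m)) q \<le> dist (x (N + m)) (x (Suc (N + m))) + dist (x (Suc (N + m))) q"
      by (rule dist_triangle)
    finally have "dist p q < r"
      using Suc.IH N[of "N + m"] q(2) by (simp add: dist_commute \<epsilon>_def)
    thus ?case using sep[OF p(1) q(1)] q(2) by simp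
  qed (simp add: p)
  have "x \<longlonglongrightarrow> p"
  proof (rule tendstoI)
    fix e :: real assume "e > 0"
    hence "min e \<epsilon> > 0" using \<epsilon> by simp
    hence "eventually (\<lambda>k. k \<ge> N \<and> (\<exists>q\<in>P. dist (x k) q < min e \<epsilon>)) sequentially"
      by (intro eventually_conj eventually_ge_at_top near)
    thus "eventually (\<lambda>k. dist (x k) p < e) sequentially"
    proof eventually_elim
      case (elim k)
      then obtain q where q: "q \<in> P" "dist (x k) q < min e \<epsilon>" by blast
      have "dist p q \<le> dist (x k) p + dist (x k) q" by (rule dist_triangle3)
      moreover have "dist (x k) p < \<epsilon>" using stay[of "k - N"] elim by simp
      moreover have "dist (x k) q < \<epsilon>" using q(2) by simp
      ultimately have "dist p q < r" using r unfolding \<epsilon>_def by linarith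
      thus ?case using sep[OF p(1) q(1)] q(2) by simp
    qed
  qed
  thus ?thesis using p(1) by blast
qed

lemma le_limit_if_eventually_incr:
  fixes f :: "nat \<Rightarrow> real"
  assumes lim: "f \<longlonglongrightarrow> a" and incr: "\<And>k. k \<ge> M \<Longrightarrow> f k \<le> f (Suc k)"
  shows "f M \<le> a"
proof -
  have "incseq (\<lambda>k. f (k + M))" using incr by (intro incseq_SucI) simp
  from incseq_le[OF this LIMSEQ_ignore_initial_segment[OF lim], of 0] show ?thesis by simp
qed

locale mu_iteration =
  fixes Q :: "real^'n^'n" and h :: "real^'n" and \<delta> :: real and x :: "nat \<Rightarrow> real^'n"
  assumes pd: "pos_def_mat Q"
    and \<delta>_pos: "\<delta> > 0"
    and start_pos: "\<forall>i. x 0 $ i > 0"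
    and iter: "\<forall>k. x (Suc k) = mu_step Q h \<delta> (x k)"
begin

lemma sym: "transpose Q = Q"
  using pd by (simp add: pos_def_mat_def)

lemma iterates_pos: "\<forall>i. x k $ i > 0"
  by (induction k) (simp_all add: start_pos iter mu_step_pos \<delta>_pos)

lemma iterates_descent:
  "qp_obj Q h (x (Suc k)) + \<delta> * (\<Sum>i\<in>UNIV. (x (Suc k) $ i - x k $ i)\<^sup>2 / x k $ i) \<le> qp_obj Q h (x k)"
  using mu_step_descent[OF sym \<delta>_pos iterates_pos] iter by simp

lemma weighted_step_nonneg: "(\<Sum>i\<in>UNIV. (x (Suc k) $ i - x k $ i)\<^sup>2 / x k $ i) \<ge> 0"
  using iterates_pos[of k] by (intro sum_nonneg) (simp add: less_imp_le)

lemma obj_decreasing: "qp_obj Q h (x (Suc k)) \<le> qp_obj Q h (x k)"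
  using iterates_descent[of k] weighted_step_nonneg[of k] \<delta>_pos
  by (smt (verit) mult_nonneg_nonneg)

lemma obj_strictly_decreasing:
  "x (Suc k) \<noteq> x k \<Longrightarrow> qp_obj Q h (x (Suc k)) < qp_obj Q h (x k)"
  using mu_step_strict_descent[OF sym \<delta>_pos iterates_pos] iter by simp

lemma obj_decseq: "decseq (\<lambda>k. qp_obj Q h (x k))"
  by (rule decseq_SucI) (rule obj_decreasing)

lemma iterates_bounded: "\<exists>R>0. \<forall>k. norm (x k) \<le> R"
proof -
  have "qp_obj Q h (x k) \<le> qp_obj Q h (x 0)" for k
    using obj_decseq by (simp add: decseq_def)
  thus ?thesis using qp_obj_sublevel_bounded[OF pd, of h "qp_obj Q h (x 0)"] by blast
qed

lemma obj_convergent: "\<exists>L. (\<lambda>k. qp_obj Q h (x k)) \<longlonglongrightarrow> L"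
proof -
  obtain R where R: "\<And>k. norm (x k) \<le> R" using iterates_bounded by blast
  have "qp_obj Q h (x k) \<ge> - (R * norm h)" for k
  proof -
    have "x k \<bullet> h \<le> R * norm h"
      using norm_cauchy_schwarz[of "x k" h] mult_right_mono[OF R[of k], of "norm h"] by simp
    thus ?thesis using pos_def_mat_psd[OF pd, of "x k"] unfolding qp_obj_def by linarith
  qed
  thus ?thesis
    using decseq_convergent[OF obj_decseq] by blast
qed

text \<open>The descent lemma controls the weighted step length; bounded iterates turn this
  into a bound on the Euclidean step length.\<close>

lemma steps_tendsto_zero: "(\<lambda>k. dist (x (Suc k)) (x k)) \<longlonglongrightarrow> 0"
proof -
  define S where "S k = (\<Sum>i\<in>UNIV. (x (Suc k) $ i - x k $ i)\<^sup>2 / x k $ i)" for k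
  obtain R where R: "R > 0" "\<And>k. norm (x k) \<le> R" using iterates_bounded by blast
  obtain L where L: "(\<lambda>k. qp_obj Q h (x k)) \<longlonglongrightarrow> L" using obj_convergent by blast
  have "(\<lambda>k. (qp_obj Q h (x k) - qp_obj Q h (x (Suc k))) / \<delta>) \<longlonglongrightarrow> (L - L) / \<delta>"
    using \<delta>_pos by (intro tendsto_intros L LIMSEQ_Suc[OF L]) simp
  moreover have "S k \<le> (qp_obj Q h (x k) - qp_obj Q h (x (Suc k))) / \<delta>" for k
    using iterates_descent[of k] \<delta>_pos by (simp add: S_def field_simps)
  ultimately have S: "S \<longlonglongrightarrow> 0"
    using weighted_step_nonneg by (intro tendsto_sandwich[of "\<lambda>_. 0" S]) (auto simp: S_def)
  have bound: "(dist (x (Suc k)) (x k))\<^sup>2 \<le> R * S k" for k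
  proof -
    have "(x (Suc k) $ i - x k $ i)\<^sup>2 \<le> R * ((x (Suc k) $ i - x k $ i)\<^sup>2 / x k $ i)" for i
    proof -
      have xi: "x k $ i > 0" using iterates_pos by blast
      have "x k $ i \<le> R" using component_le_norm_cart[of "x k" i] R(2)[of k] by linarith
      hence "x k $ i * ((x (Suc k) $ i - x k $ i)\<^sup>2 / x k $ i)
               \<le> R * ((x (Suc k) $ i - x k $ i)\<^sup>2 / x k $ i)"
        using xi by (intro mult_right_mono) simp_all
      thus ?thesis using xi by simp
    qed
    hence "(\<Sum>i\<in>UNIV. (x (Suc k) $ i - x k $ i)\<^sup>2) \<le> R * S k"
      unfolding S_def sum_distrib_left by (rule sum_mono)
    moreover have "(dist (x (Suc k)) (x k))\<^sup>2 = (x (Suc k) - x k) \<bullet> (x (Suc k) - x k)"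
      by (simp only: dist_norm dot_square_norm)
    ultimately show ?thesis by (simp add: inner_vec_def power2_eq_square)
  qed
  have "(\<lambda>k. (dist (x (Suc k)) (x k))\<^sup>2) \<longlonglongrightarrow> 0"
  proof (rule tendsto_sandwich[of "\<lambda>_. 0" _ _ "\<lambda>k. R * S k"])
    show "(\<lambda>k. R * S k) \<longlonglongrightarrow> 0" using tendsto_mult[OF tendsto_const S, of R] by simp
  qed (simp_all add: bound)
  from tendsto_real_sqrt[OF this] show ?thesis by simp
qed

text \<open>Every cluster point of the iterates is a nonnegative fixed point of the update,
  by continuity of the update and vanishing step lengths.\<close>

lemma cluster_point_fixed:
  assumes r: "strict_mono r" and lim: "(x \<circ> r) \<longlonglongrightarrow> q"
  shows "q \<in> {p. (\<forall>i. p $ i \<ge> 0) \<and> mu_step Q h \<delta> p = p}"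
proof -
  have lim': "(\<lambda>j. x (r j)) \<longlonglongrightarrow> q" using lim by (simp add: o_def)
  have q_nonneg: "\<forall>i. q $ i \<ge> 0"
  proof
    fix i
    show "q $ i \<ge> 0"
      using tendsto_vec_nth[OF lim', of i] iterates_pos
      by (intro LIMSEQ_le_const[of "\<lambda>j. x (r j) $ i"]) (auto intro: less_imp_le)
  qed
  have "(\<lambda>j. x (Suc (r j))) \<longlonglongrightarrow> mu_step Q h \<delta> q"
    using mu_step_tendsto[OF lim' \<delta>_pos q_nonneg] iter by simp
  moreover have "(\<lambda>j. x (Suc (r j))) \<longlonglongrightarrow> q"
  proof -
    have "(\<lambda>j. dist (x (Suc (r j))) (x (r j))) \<longlonglongrightarrow> 0"
      using LIMSEQ_subseq_LIMSEQ[OF steps_tendsto_zero r] by (simp add: o_def)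
    hence "(\<lambda>j. x (Suc (r j)) - x (r j)) \<longlonglongrightarrow> 0"
      by (simp add: dist_norm tendsto_norm_zero_iff)
    from tendsto_add[OF lim' this] show ?thesis by simp
  qed
  ultimately show ?thesis using q_nonneg LIMSEQ_unique by auto
qed

lemma iterates_converge: "\<exists>p. (\<forall>i. p $ i \<ge> 0) \<and> mu_step Q h \<delta> p = p \<and> x \<longlonglongrightarrow> p"
proof -
  obtain R where "\<And>k. norm (x k) \<le> R" using iterates_bounded by blast
  hence "bounded (range x)" by (auto simp: bounded_iff)
  hence "\<exists>p\<in>{p. (\<forall>i. p $ i \<ge> 0) \<and> mu_step Q h \<delta> p = p}. x \<longlonglongrightarrow> p"
    by (rule convergent_if_finite_cluster_points[OF _ steps_tendsto_zero
        finite_mu_fixed_points[OF pd \<delta>_pos]]) (rule cluster_point_fixed; assumption)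
  thus ?thesis by blast
qed

text \<open>At the limit, a zero coordinate has a nonnegative partial derivative: otherwise
  the update ratio of that coordinate would eventually exceed one, so the positive
  coordinate would eventually increase and could not tend to zero.\<close>

lemma limit_grad_nonneg:
  assumes lim: "x \<longlonglongrightarrow> p" and p_nonneg: "\<forall>j. p $ j \<ge> 0" and zero: "p $ i = 0"
  shows "qp_grad Q h p $ i \<ge> 0"
proof (rule ccontr)
  assume "\<not> qp_grad Q h p $ i \<ge> 0"
  moreover have "mu_den Q h \<delta> p $ i \<ge> \<delta>" by (rule mu_den_ge[OF p_nonneg])
  ultimately have "mu_num Q h \<delta> p $ i / mu_den Q h \<delta> p $ i > 1"
    using \<delta>_pos by (simp add: mu_num_eq)
  from order_tendstoD(1)[OF mu_ratio_tendsto[OF lim \<delta>_pos p_nonneg] this]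
  obtain M where M: "\<And>k. k \<ge> M \<Longrightarrow> mu_num Q h \<delta> (x k) $ i / mu_den Q h \<delta> (x k) $ i > 1"
    by (auto simp: eventually_sequentially)
  have "x k $ i \<le> x (Suc k) $ i" if "k \<ge> M" for k
    using mult_left_mono[of 1 _ "x k $ i", OF less_imp_le[OF M[OF that]]] iterates_pos[of k]
    by (simp add: iter mu_step_nth less_imp_le)
  hence "x M $ i \<le> p $ i"
    using le_limit_if_eventually_incr[of "\<lambda>k. x k $ i" "p $ i" M] tendsto_vec_nth[OF lim] by blast
  thus False using iterates_pos[of M, rule_format, of i] zero by simp
qed

end

theorem theorem1:
  fixes Q :: "real^'n^'n" and h :: "real^'n" and \<delta> :: real
    and x :: "nat \<Rightarrow> real^'n"
  assumes "pos_def_mat Q"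
    and "\<delta> > 0"
    and "\<forall>i. x 0 $ i > 0"
    and "\<forall>k. x (Suc k) = mu_step Q h \<delta> (x k)"
  shows "(\<forall>k i. x k $ i > 0)
    \<and> (\<forall>k. qp_obj Q h (x (Suc k)) \<le> qp_obj Q h (x k))
    \<and> (\<forall>k. x (Suc k) \<noteq> x k \<longrightarrow> qp_obj Q h (x (Suc k)) < qp_obj Q h (x k))
    \<and> (\<exists>xs. (\<forall>i. xs $ i \<ge> 0)
          \<and> (\<forall>y. (\<forall>i. y $ i \<ge> 0) \<longrightarrow> qp_obj Q h xs \<le> qp_obj Q h y)
          \<and> mu_step Q h \<delta> xs = xs
          \<and> (\<lambda>k. qp_obj Q h (x k)) \<longlonglongrightarrow> qp_obj Q h xs)"
proof -
  interpret mu_iteration Q h \<delta> x using assms by unfold_locales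
  obtain p where p_nonneg: "\<forall>i. p $ i \<ge> 0" and p_fixed: "mu_step Q h \<delta> p = p"
    and lim: "x \<longlonglongrightarrow> p"
    using iterates_converge by blast
  have "\<forall>i. p $ i \<ge> 0 \<and> qp_grad Q h p $ i \<ge> 0 \<and> (p $ i = 0 \<or> qp_grad Q h p $ i = 0)"
  proof
    fix i
    have "p $ i = 0 \<or> qp_grad Q h p $ i = 0"
      using p_fixed mu_step_fixed_iff[OF \<delta>_pos p_nonneg] by blast
    thus "p $ i \<ge> 0 \<and> qp_grad Q h p $ i \<ge> 0 \<and> (p $ i = 0 \<or> qp_grad Q h p $ i = 0)"
      using limit_grad_nonneg[OF lim p_nonneg] p_nonneg by auto
  qed
  hence "\<forall>y. (\<forall>i. y $ i \<ge> 0) \<longrightarrow> qp_obj Q h p \<le> qp_obj Q h y"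
    using qp_obj_min_if_kkt[OF sym pos_def_mat_psd[OF pd]] by blast
  moreover have "(\<lambda>k. qp_obj Q h (x k)) \<longlonglongrightarrow> qp_obj Q h p"
    by (rule qp_obj_tendsto[OF lim])
  ultimately show ?thesis
    using iterates_pos obj_decreasing obj_strictly_decreasing p_nonneg p_fixed by blast
qed

end
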